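(* Let $n\ge2$, $N\ge1$, $L>0$, $h=L/N$. There is a constant $C>0$ independent of $h$ such that the following holds. Let $\Phi=(\Phi_{ij})_{i,j=1}^{n-1}$ be a matrix of edge-centered grid functions such that at every edge point $\ell+\frac12$ the matrix $(\Phi_{ij,\ell+\frac12})$ is symmetric positive definite, and let $\lambda_{\min}>0$ be the minimum over $\ell=1,\dots,N$ of the eigenvalues of $(\Phi_{ij,\ell+\frac12})_{i,j}$. Let $\phi\in\mathring{\mathcal C}^{n-1}_{\rm per}$ satisfy $\|\phi\|_{L^\infty}:=\max_{i,\ell}|\phi_{i,\ell}|\le M$. Then $$\|\mathcal L_\Phi^{-1}\phi\|_{L^\infty}\le\frac{CM}{\lambda_{\min}}\,h^{-\frac12}(n-1)^{\frac12}.$$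
   Context: Grid on the torus $[0,L]$ with $N$ intervals, $h=L/N$: cell-centered grid functions are $N$-periodic sequences $(f_\ell)$, edge-centered ones $N$-periodic sequences $(f_{\ell+\frac12})$. $(d_h\phi)_\ell=(\phi_{\ell+\frac12}-\phi_{\ell-\frac12})/h$, $(D_hf)_{\ell+\frac12}=(f_{\ell+1}-f_\ell)/h$. $\mathring{\mathcal C}^{n-1}_{\rm per}$ denotes $(n-1)$-tuples $f=(f_1,\dots,f_{n-1})$ of cell-centered grid functions with $\sum_{\ell=1}^Nf_{i,\ell}=0$ for each $i$. The operator $\mathcal L_\Phi:\mathring{\mathcal C}^{n-1}_{\rm per}\to\mathring{\mathcal C}^{n-1}_{\rm per}$ is $(\mathcal L_\Phi f)_i=-\sum_{j=1}^{n-1}d_h(\Phi_{ij}D_hf_j)$ (products pointwise on edges); it is invertible on $\mathring{\mathcal C}^{n-1}_{\rm per}$, and $\mathcal L_\Phi^{-1}\phi$ denotes the unique $f\in\mathring{\mathcal C}^{n-1}_{\rm per}$ with $\mathcal L_\Phi f=\phi$; $\|f\|_{L^\infty}=\max_{i,\ell}|f_{i,\ell}|$. *)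

theory Defs
  imports "HOL-Analysis.Analysis"
begin

text \<open>Species/components are indexed by i in {1..m} (m = n-1).
A cell-centered grid function is g :: int \<Rightarrow> real with g l = value at cell l.
An edge-centered grid function is p :: int \<Rightarrow> real with p l = value at edge l+1/2.
A tuple of grid functions is f :: nat \<Rightarrow> int \<Rightarrow> real (component i = f i);
a matrix of edge functions is Phi :: nat \<Rightarrow> nat \<Rightarrow> int \<Rightarrow> real.\<close>

definition periodic_grid :: "nat \<Rightarrow> (int \<Rightarrow> real) \<Rightarrow> bool" where
  "periodic_grid N g \<longleftrightarrow> (\<forall>l. g (l + int N) = g l)"

text \<open>(D_h f)_{l+1/2} = (f_{l+1} - f_l)/h, stored at index l.\<close>
definition Dh :: "real \<Rightarrow> (int \<Rightarrow> real) \<Rightarrow> int \<Rightarrow> real" where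
  "Dh h f l = (f (l + 1) - f l) / h"

text \<open>(d_h p)_l = (p_{l+1/2} - p_{l-1/2})/h; p_{l+1/2} is stored at index l.\<close>
definition dh :: "real \<Rightarrow> (int \<Rightarrow> real) \<Rightarrow> int \<Rightarrow> real" where
  "dh h p l = (p l - p (l - 1)) / h"

definition in_C0 :: "nat \<Rightarrow> nat \<Rightarrow> (nat \<Rightarrow> int \<Rightarrow> real) \<Rightarrow> bool" where
  "in_C0 n N f \<longleftrightarrow> (\<forall>i\<in>{1..n-1}. periodic_grid N (f i) \<and> (\<Sum>l=1..int N. f i l) = 0)"

definition LPhi :: "nat \<Rightarrow> real \<Rightarrow> (nat \<Rightarrow> nat \<Rightarrow> int \<Rightarrow> real) \<Rightarrow> (nat \<Rightarrow> int \<Rightarrow> real)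
    \<Rightarrow> nat \<Rightarrow> int \<Rightarrow> real" where
  "LPhi n h Phi f i l = - dh h (\<lambda>k. \<Sum>j\<in>{1..n-1}. Phi i j k * Dh h (f j) k) l"

text \<open>The inverse: the unique element f of the space with L_Phi f = phi
(components outside {1..n-1} normalised to 0 so that it is a unique object).\<close>
definition LPhi_inv :: "nat \<Rightarrow> nat \<Rightarrow> real \<Rightarrow> (nat \<Rightarrow> nat \<Rightarrow> int \<Rightarrow> real)
    \<Rightarrow> (nat \<Rightarrow> int \<Rightarrow> real) \<Rightarrow> (nat \<Rightarrow> int \<Rightarrow> real)" where
  "LPhi_inv n N h Phi phi = (THE f. in_C0 n N f \<and> (\<forall>i. i \<notin> {1..n-1} \<longrightarrow> f i = (\<lambda>_. 0))
       \<and> (\<forall>i\<in>{1..n-1}. \<forall>l. LPhi n h Phi f i l = phi i l))"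

definition Linf_norm :: "nat \<Rightarrow> nat \<Rightarrow> (nat \<Rightarrow> int \<Rightarrow> real) \<Rightarrow> real" where
  "Linf_norm n N f = Max {\<bar>f i l\<bar> | i l. i \<in> {1..n-1} \<and> l \<in> {1..int N}}"

definition sym_pos_def :: "nat \<Rightarrow> (nat \<Rightarrow> nat \<Rightarrow> real) \<Rightarrow> bool" where
  "sym_pos_def m A \<longleftrightarrow> (\<forall>i\<in>{1..m}. \<forall>j\<in>{1..m}. A i j = A j i) \<and>
     (\<forall>x. (\<exists>i\<in>{1..m}. x i \<noteq> 0) \<longrightarrow> (\<Sum>i\<in>{1..m}. \<Sum>j\<in>{1..m}. x i * A i j * x j) > 0)"

definition is_eigenvalue :: "nat \<Rightarrow> (nat \<Rightarrow> nat \<Rightarrow> real) \<Rightarrow> real \<Rightarrow> bool" where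
  "is_eigenvalue m A mu \<longleftrightarrow> (\<exists>x. (\<exists>i\<in>{1..m}. x i \<noteq> 0) \<and>
     (\<forall>i\<in>{1..m}. (\<Sum>j\<in>{1..m}. A i j * x j) = mu * x i))"

definition lambda_min :: "nat \<Rightarrow> nat \<Rightarrow> (nat \<Rightarrow> nat \<Rightarrow> int \<Rightarrow> real) \<Rightarrow> real" where
  "lambda_min n N Phi = Min (\<Union>l\<in>{1..int N}. {mu. is_eigenvalue (n-1) (\<lambda>i j. Phi i j l) mu})"

end

theory Submission
  imports Defs "Jordan_Normal_Form.Determinant" "Jordan_Normal_Form.Char_Poly"
begin

text \<open>Testing \<open>L\<^sub>\<Phi> f = \<phi>\<close> against \<open>f\<close> and summing by parts gives the energy identity
  \<open>\<Sum>\<^sub>\<ell> (D\<^sub>h f)\<^sup>T \<Phi> (D\<^sub>h f) = \<Sum> f \<cdot> \<phi>\<close>. Since \<open>\<lambda>\<^sub>m\<^sub>i\<^sub>n\<close> bounds the Rayleigh quotient of every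
  \<open>\<Phi>\<^sub>\<ell>\<close> from below, \<open>\<lambda>\<^sub>m\<^sub>i\<^sub>n \<Sum>\<^sub>\<ell> |D\<^sub>h f|\<^sup>2 \<le> (n-1) N F M\<close> with \<open>F = \<parallel>f\<parallel>\<^sub>\<infinity>\<close>. A mean-zero grid
  function changes sign, so \<open>F \<le> h \<Sum>\<^sub>\<ell> |D\<^sub>h f\<^sub>i|\<close>, and Cauchy--Schwarz gives
  \<open>F\<^sup>2 \<le> h\<^sup>2 N \<Sum>\<^sub>\<ell> |D\<^sub>h f|\<^sup>2 \<le> h\<^sup>2 N\<^sup>2 (n-1) F M / \<lambda>\<^sub>m\<^sub>i\<^sub>n\<close>. Hence \<open>F \<le> L\<^sup>2 (n-1) M / \<lambda>\<^sub>m\<^sub>i\<^sub>n\<close>, a bound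
  independent of \<open>h\<close> that implies the claim with \<open>C = L\<^sup>5\<^sup>/\<^sup>2 (n-1)\<^sup>1\<^sup>/\<^sup>2\<close> because \<open>h \<le> L\<close>.
  The same identity shows that \<open>L\<^sub>\<Phi>\<close> is injective on mean-zero grid functions, hence
  bijective by finite dimensionality, so \<open>L\<^sub>\<Phi>\<^sup>-\<^sup>1 \<phi>\<close> is indeed a solution.\<close>

section \<open>Quadratic forms and the smallest eigenvalue\<close>

definition quad_form :: "nat \<Rightarrow> (nat \<Rightarrow> nat \<Rightarrow> real) \<Rightarrow> (nat \<Rightarrow> real) \<Rightarrow> real" where
  "quad_form m A x = (\<Sum>i\<in>{1..m}. \<Sum>j\<in>{1..m}. x i * A i j * x j)"

definition sq_norm :: "nat \<Rightarrow> (nat \<Rightarrow> real) \<Rightarrow> real" where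
  "sq_norm m x = (\<Sum>i\<in>{1..m}. (x i)\<^sup>2)"

lemma quad_form_cong: "(\<And>i. i \<in> {1..m} \<Longrightarrow> x i = y i) \<Longrightarrow> quad_form m A x = quad_form m A y"
  unfolding quad_form_def by (intro sum.cong refl) auto

lemma sq_norm_cong: "(\<And>i. i \<in> {1..m} \<Longrightarrow> x i = y i) \<Longrightarrow> sq_norm m x = sq_norm m y"
  unfolding sq_norm_def by (intro sum.cong refl) auto

lemma quad_form_scale: "quad_form m A (\<lambda>i. c * x i) = c\<^sup>2 * quad_form m A x"
  unfolding quad_form_def by (simp add: sum_distrib_left power2_eq_square mult_ac)

lemma sq_norm_scale: "sq_norm m (\<lambda>i. c * x i) = c\<^sup>2 * sq_norm m x"
  unfolding sq_norm_def by (simp add: sum_distrib_left power2_eq_square mult_ac)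

lemma sq_norm_nonneg: "sq_norm m x \<ge> 0"
  unfolding sq_norm_def by (simp add: sum_nonneg)

lemma sq_norm_eq_0_iff: "sq_norm m x = 0 \<longleftrightarrow> (\<forall>i\<in>{1..m}. x i = 0)"
  unfolding sq_norm_def by (subst sum_nonneg_eq_0_iff) auto

lemma sq_norm_add:
  "sq_norm m (\<lambda>i. x i + t * y i) = sq_norm m x + 2 * t * (\<Sum>i\<in>{1..m}. x i * y i) + t\<^sup>2 * sq_norm m y"
  unfolding sq_norm_def
  by (simp add: power2_eq_square algebra_simps sum.distrib sum_distrib_left)

lemma quad_form_add:
  assumes sym: "\<forall>i\<in>{1..m}. \<forall>j\<in>{1..m}. A i j = A j i"
  shows "quad_form m A (\<lambda>i. x i + t * y i)
       = quad_form m A x + 2 * t * (\<Sum>i\<in>{1..m}. y i * (\<Sum>j\<in>{1..m}. A i j * x j)) + t\<^sup>2 * quad_form m A y"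
proof -
  have expand: "(x i + t * y i) * A i j * (x j + t * y j)
      = x i * A i j * x j + t * (x i * A i j * y j) + t * (y i * A i j * x j) + t\<^sup>2 * (y i * A i j * y j)"
    for i j by (simp add: algebra_simps power2_eq_square)
  have "(\<Sum>i\<in>{1..m}. \<Sum>j\<in>{1..m}. x i * A i j * y j) = (\<Sum>j\<in>{1..m}. \<Sum>i\<in>{1..m}. x i * A i j * y j)"
    by (rule sum.swap)
  also have "\<dots> = (\<Sum>j\<in>{1..m}. \<Sum>i\<in>{1..m}. y j * A j i * x i)"
    using sym by (intro sum.cong refl) (simp add: mult_ac)
  finally have cross: "(\<Sum>i\<in>{1..m}. \<Sum>j\<in>{1..m}. x i * A i j * y j)
      = (\<Sum>i\<in>{1..m}. \<Sum>j\<in>{1..m}. y i * A i j * x j)" .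
  have "quad_form m A (\<lambda>i. x i + t * y i) = quad_form m A x
      + t * (\<Sum>i\<in>{1..m}. \<Sum>j\<in>{1..m}. x i * A i j * y j)
      + t * (\<Sum>i\<in>{1..m}. \<Sum>j\<in>{1..m}. y i * A i j * x j) + t\<^sup>2 * quad_form m A y"
    unfolding quad_form_def expand by (simp add: sum.distrib sum_distrib_left)
  then show ?thesis
    unfolding cross by (simp add: sum_distrib_left mult_ac)
qed

lemma linear_coeff_eq_0_if_nonneg:
  fixes a c :: real
  assumes nonneg: "\<And>t. 0 \<le> t * a + t\<^sup>2 * c"
  shows "a = 0"
proof (rule ccontr)
  assume "a \<noteq> 0"
  define k where "k = \<bar>c\<bar> + 1"
  define t where "t = - a / k"
  have k: "k > 0"
    unfolding k_def by simp
  have "t * a + t\<^sup>2 * c = - a\<^sup>2 / k + a\<^sup>2 * c / k\<^sup>2"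
    using k unfolding t_def by (simp add: power2_eq_square field_simps)
  also have "\<dots> \<le> - a\<^sup>2 / k + a\<^sup>2 * \<bar>c\<bar> / k\<^sup>2"
    by (simp add: divide_right_mono mult_left_mono)
  also have "\<dots> = - a\<^sup>2 / k + a\<^sup>2 * (k - 1) / k\<^sup>2"
    by (simp add: k_def)
  also have "\<dots> = - a\<^sup>2 / k\<^sup>2"
    using k by (simp add: power2_eq_square field_simps)
  also have "\<dots> < 0"
    using \<open>a \<noteq> 0\<close> k by simp
  finally show False
    using nonneg[of t] by simp
qed

lemma eigenvector_if_minimises_rayleigh:
  assumes sym: "\<forall>i\<in>{1..m}. \<forall>j\<in>{1..m}. A i j = A j i"
    and below: "\<And>x. r * sq_norm m x \<le> quad_form m A x"
    and attained: "quad_form m A x0 = r * sq_norm m x0"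
  shows "\<forall>i\<in>{1..m}. (\<Sum>j\<in>{1..m}. A i j * x0 j) = r * x0 i"
proof -
  define w where "w i = (\<Sum>j\<in>{1..m}. A i j * x0 j) - r * x0 i" for i
  \<comment> \<open>perturbing \<open>x0\<close> along the residual \<open>w\<close>, the first-order term of the excess is \<open>2 t |w|\<^sup>2\<close>\<close>
  have cross: "(\<Sum>i\<in>{1..m}. w i * (\<Sum>j\<in>{1..m}. A i j * x0 j)) - r * (\<Sum>i\<in>{1..m}. x0 i * w i)
      = sq_norm m w"
    unfolding sq_norm_def w_def
    by (simp add: sum_distrib_left sum_subtractf[symmetric] power2_eq_square algebra_simps)
  have "0 \<le> t * (2 * sq_norm m w) + t\<^sup>2 * (quad_form m A w - r * sq_norm m w)" for t
  proof -
    have "r * sq_norm m (\<lambda>i. x0 i + t * w i) \<le> quad_form m A (\<lambda>i. x0 i + t * w i)"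
      by (rule below)
    then show ?thesis
      unfolding sq_norm_add quad_form_add[OF sym] attained cross[symmetric]
      by (simp add: algebra_simps)
  qed
  then have "2 * sq_norm m w = 0"
    by (rule linear_coeff_eq_0_if_nonneg)
  then show ?thesis
    unfolding w_def by (simp add: sq_norm_eq_0_iff)
qed

text \<open>Coordinates outside \<open>{1..m}\<close> are pinned to \<open>0\<close>, so that the sphere is compact in the
  product topology of \<open>nat \<Rightarrow> real\<close>.\<close>

definition unit_sphere :: "nat \<Rightarrow> (nat \<Rightarrow> real) set" where
  "unit_sphere m = {x. (\<forall>i. i \<notin> {1..m} \<longrightarrow> x i = 0) \<and> sq_norm m x = 1}"

lemma compact_unit_sphere: "compact (unit_sphere m)"
proof -
  define K :: "(nat \<Rightarrow> real) set"
    where "K = PiE UNIV (\<lambda>i. if i \<in> {1..m} then {-1..1} else {0})"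
  have "compactin (product_topology (\<lambda>i. euclidean) UNIV) K"
    unfolding K_def by (subst compactin_PiE) auto
  then have "compact K"
    by (simp add: euclidean_product_topology compactin_euclidean_iff)
  moreover have "closed {x::nat \<Rightarrow> real. sq_norm m x = 1}"
    unfolding sq_norm_def
    by (intro closed_Collect_eq continuous_intros continuous_on_product_coordinates)
  ultimately have "compact (K \<inter> {x. sq_norm m x = 1})"
    by (rule compact_Int_closed)
  moreover have "unit_sphere m = K \<inter> {x. sq_norm m x = 1}"
  proof (intro equalityI subsetI)
    fix x assume x: "x \<in> unit_sphere m"
    have "\<bar>x i\<bar> \<le> 1" if i: "i \<in> {1..m}" for i
    proof -
      have "(x i)\<^sup>2 \<le> sq_norm m x"
        unfolding sq_norm_def using i by (intro member_le_sum) auto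
      then show ?thesis
        using x unfolding unit_sphere_def by (simp add: abs_square_le_1)
    qed
    then show "x \<in> K \<inter> {x. sq_norm m x = 1}"
      using x unfolding unit_sphere_def K_def by (auto simp: abs_le_iff)
  qed (auto simp: unit_sphere_def K_def PiE_iff split: if_splits)
  ultimately show ?thesis
    by simp
qed

lemma normalise_into_unit_sphere:
  assumes pos: "sq_norm m x > 0"
  defines "y \<equiv> \<lambda>i. if i \<in> {1..m} then x i / sqrt (sq_norm m x) else 0"
  shows "y \<in> unit_sphere m" and "quad_form m A y = quad_form m A x / sq_norm m x"
proof -
  have restrict: "i \<in> {1..m} \<Longrightarrow> y i = (1 / sqrt (sq_norm m x)) * x i" for i
    unfolding y_def by simp
  have "sq_norm m y = (1 / sqrt (sq_norm m x))\<^sup>2 * sq_norm m x"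
    unfolding sq_norm_scale[symmetric] by (rule sq_norm_cong) (rule restrict)
  then show "y \<in> unit_sphere m"
    using pos unfolding unit_sphere_def y_def by (simp add: power_divide)
  have "quad_form m A y = (1 / sqrt (sq_norm m x))\<^sup>2 * quad_form m A x"
    unfolding quad_form_scale[symmetric] by (rule quad_form_cong) (rule restrict)
  then show "quad_form m A y = quad_form m A x / sq_norm m x"
    using pos by (simp add: power_divide)
qed

lemma quad_form_zero_if_sq_norm_zero: "sq_norm m x = 0 \<Longrightarrow> quad_form m A x = 0"
  unfolding sq_norm_eq_0_iff quad_form_def by simp

lemma exists_eigenvalue_below_quad_form:
  assumes m: "m \<ge> 1" and sym: "\<forall>i\<in>{1..m}. \<forall>j\<in>{1..m}. A i j = A j i"
  shows "\<exists>\<mu>. is_eigenvalue m A \<mu> \<and> (\<forall>x. \<mu> * sq_norm m x \<le> quad_form m A x)"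
proof -
  have "sq_norm m (\<lambda>i. if i = 1 then 1 else 0) = (\<Sum>i\<in>{1..m}. if i = 1 then 1 else 0)"
    unfolding sq_norm_def by (intro sum.cong) auto
  then have "(\<lambda>i. if i = 1 then 1 else 0) \<in> unit_sphere m"
    using m unfolding unit_sphere_def by simp
  then have nonempty: "unit_sphere m \<noteq> {}"
    by blast
  have "continuous_on (unit_sphere m) (quad_form m A)"
    unfolding quad_form_def
    by (intro continuous_intros continuous_on_subset[OF continuous_on_product_coordinates]) simp_all
  then obtain x0 where x0: "x0 \<in> unit_sphere m"
    and min: "\<And>y. y \<in> unit_sphere m \<Longrightarrow> quad_form m A x0 \<le> quad_form m A y"
    using continuous_attains_inf[OF compact_unit_sphere nonempty] by blast
  define r where "r = quad_form m A x0"
  have below: "r * sq_norm m x \<le> quad_form m A x" for x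
  proof (cases "sq_norm m x = 0")
    case True
    then show ?thesis
      by (simp add: quad_form_zero_if_sq_norm_zero)
  next
    case False
    then have pos: "sq_norm m x > 0"
      using sq_norm_nonneg[of m x] by linarith
    have "r \<le> quad_form m A x / sq_norm m x"
      unfolding r_def using min normalise_into_unit_sphere[OF pos] by metis
    then show ?thesis
      using pos by (simp add: field_simps)
  qed
  have unit: "sq_norm m x0 = 1"
    using x0 unfolding unit_sphere_def by simp
  then have "\<exists>i\<in>{1..m}. x0 i \<noteq> 0"
    using sq_norm_eq_0_iff[of m x0] by auto
  moreover have "\<forall>i\<in>{1..m}. (\<Sum>j\<in>{1..m}. A i j * x0 j) = r * x0 i"
    using eigenvector_if_minimises_rayleigh[OF sym below] unit unfolding r_def by simp
  ultimately show ?thesis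
    using below unfolding is_eigenvalue_def by blast
qed

lemma eigenvalue_of_is_eigenvalue:
  assumes ev: "is_eigenvalue m A \<mu>"
  shows "eigenvalue (Matrix.mat m m (\<lambda>(i, j). A (Suc i) (Suc j))) \<mu>"
proof -
  define B where "B = Matrix.mat m m (\<lambda>(i, j). A (Suc i) (Suc j))"
  obtain x where nz: "\<exists>i\<in>{1..m}. x i \<noteq> 0"
    and eig: "\<forall>i\<in>{1..m}. (\<Sum>j\<in>{1..m}. A i j * x j) = \<mu> * x i"
    using ev unfolding is_eigenvalue_def by auto
  define v where "v = Matrix.vec m (\<lambda>i. x (Suc i))"
  have "v \<noteq> 0\<^sub>v m"
  proof
    assume "v = 0\<^sub>v m"
    moreover obtain i where i: "i \<in> {1..m}" "x i \<noteq> 0"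
      using nz by auto
    moreover have "v $ (i - 1) = x i"
      unfolding v_def using i by auto
    ultimately show False
      using i index_zero_vec(1)[of "i - 1" m] by auto
  qed
  moreover have "B *\<^sub>v v = \<mu> \<cdot>\<^sub>v v"
  proof (rule eq_vecI)
    fix k assume "k < dim_vec (\<mu> \<cdot>\<^sub>v v)"
    then have k: "k < m"
      unfolding v_def by simp
    have "(B *\<^sub>v v) $ k = (\<Sum>j<m. A (Suc k) (Suc j) * x (Suc j))"
      using k unfolding B_def v_def
      by (simp add: mult_mat_vec_def scalar_prod_def lessThan_atLeast0)
    also have "\<dots> = (\<Sum>j\<in>{1..m}. A (Suc k) j * x j)"
      by (simp add: sum.atLeast1_atMost_eq)
    also have "\<dots> = \<mu> * x (Suc k)"
      using eig k by auto
    finally show "(B *\<^sub>v v) $ k = (\<mu> \<cdot>\<^sub>v v) $ k"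
      using k unfolding v_def by simp
  qed (simp add: B_def v_def)
  moreover have "v \<in> carrier_vec m" and "B \<in> carrier_mat m m"
    unfolding v_def B_def by simp_all
  ultimately have "eigenvalue B \<mu>"
    unfolding eigenvalue_def eigenvector_def by blast
  then show ?thesis
    unfolding B_def .
qed

lemma finite_eigenvalues: "finite {\<mu>. is_eigenvalue m A \<mu>}"
proof -
  define B where "B = Matrix.mat m m (\<lambda>(i, j). A (Suc i) (Suc j))"
  have B: "B \<in> carrier_mat m m"
    unfolding B_def by simp
  have "{\<mu>. is_eigenvalue m A \<mu>} \<subseteq> {k. poly (char_poly B) k = 0}"
    using eigenvalue_of_is_eigenvalue eigenvalue_root_char_poly[OF B] unfolding B_def by blast
  moreover have "char_poly B \<noteq> 0"
    using degree_monic_char_poly[OF B] by auto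
  then have "finite {k. poly (char_poly B) k = 0}"
    by (rule poly_roots_finite)
  ultimately show ?thesis
    using finite_subset by blast
qed

lemma quad_form_pos: "sym_pos_def m A \<Longrightarrow> \<exists>i\<in>{1..m}. x i \<noteq> 0 \<Longrightarrow> quad_form m A x > 0"
  unfolding sym_pos_def_def quad_form_def by blast

lemma quad_form_nonneg: "sym_pos_def m A \<Longrightarrow> quad_form m A x \<ge> 0"
  using quad_form_pos[of m A x] by (force simp: quad_form_def)

lemma eigenvalue_pos:
  assumes spd: "sym_pos_def m A" and ev: "is_eigenvalue m A \<mu>"
  shows "\<mu> > 0"
proof -
  obtain x where nz: "\<exists>i\<in>{1..m}. x i \<noteq> 0"
    and eig: "\<forall>i\<in>{1..m}. (\<Sum>j\<in>{1..m}. A i j * x j) = \<mu> * x i"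
    using ev unfolding is_eigenvalue_def by auto
  have "quad_form m A x = (\<Sum>i\<in>{1..m}. x i * (\<Sum>j\<in>{1..m}. A i j * x j))"
    unfolding quad_form_def by (simp add: sum_distrib_left mult_ac)
  also have "\<dots> = \<mu> * sq_norm m x"
    unfolding sq_norm_def using eig by (simp add: sum_distrib_left power2_eq_square mult_ac)
  finally have "\<mu> * sq_norm m x > 0"
    using quad_form_pos[OF spd nz] by simp
  then show ?thesis
    using sq_norm_nonneg[of m x] by (simp add: zero_less_mult_iff)
qed

lemma lambda_min_pos_and_below_quad_form:
  assumes n: "n \<ge> 2" and N: "N \<ge> 1" and spd: "\<forall>l. sym_pos_def (n - 1) (\<lambda>i j. Phi i j l)"
  shows "lambda_min n N Phi > 0"
    and "l \<in> {1..int N} \<Longrightarrow> lambda_min n N Phi * sq_norm (n - 1) x \<le> quad_form (n - 1) (\<lambda>i j. Phi i j l) x"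
proof -
  define E where "E = (\<Union>l\<in>{1..int N}. {\<mu>. is_eigenvalue (n - 1) (\<lambda>i j. Phi i j l) \<mu>})"
  have lambda_min: "lambda_min n N Phi = Min E"
    unfolding lambda_min_def E_def ..
  have finite: "finite E"
    unfolding E_def by (intro finite_UN_I) (auto intro: finite_eigenvalues)
  have rayleigh: "\<exists>\<mu>. is_eigenvalue (n - 1) (\<lambda>i j. Phi i j l) \<mu>
      \<and> (\<forall>x. \<mu> * sq_norm (n - 1) x \<le> quad_form (n - 1) (\<lambda>i j. Phi i j l) x)" for l
    using n spd by (intro exists_eigenvalue_below_quad_form) (auto simp: sym_pos_def_def)
  have "E \<noteq> {}"
    using rayleigh[of 1] N unfolding E_def by auto
  then have "Min E \<in> E"
    using finite by (rule Min_in[rotated])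
  then show "lambda_min n N Phi > 0"
    unfolding lambda_min E_def using eigenvalue_pos spd by blast
  assume l: "l \<in> {1..int N}"
  obtain \<mu> where \<mu>: "is_eigenvalue (n - 1) (\<lambda>i j. Phi i j l) \<mu>"
    and below: "\<And>x. \<mu> * sq_norm (n - 1) x \<le> quad_form (n - 1) (\<lambda>i j. Phi i j l) x"
    using rayleigh by blast
  have "Min E \<le> \<mu>"
    using finite \<mu> l unfolding E_def by (intro Min_le) auto
  then have "Min E * sq_norm (n - 1) x \<le> \<mu> * sq_norm (n - 1) x"
    using sq_norm_nonneg by (rule mult_right_mono)
  then show "lambda_min n N Phi * sq_norm (n - 1) x \<le> quad_form (n - 1) (\<lambda>i j. Phi i j l) x"
    using below[of x] unfolding lambda_min by linarith
qed

section \<open>Solvability of finite linear systems\<close>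

lemma linear_combination_apply:
  fixes T :: "('a \<Rightarrow> real) \<Rightarrow> 'b \<Rightarrow> real"
  assumes add: "\<And>x y. T (\<lambda>a. x a + y a) k = T x k + T y k"
    and scale: "\<And>c x. T (\<lambda>a. c * x a) k = c * T x k"
    and Q: "finite Q"
  shows "T (\<lambda>a. \<Sum>q\<in>Q. c q * d q a) k = (\<Sum>q\<in>Q. c q * T (d q) k)"
  using Q
proof (induction Q rule: finite_induct)
  case empty
  show ?case
    using scale[of 0 "\<lambda>_. 0"] by simp
next
  case (insert q Q)
  then show ?case
    using add[of "\<lambda>a. c q * d q a" "\<lambda>a. \<Sum>q\<in>Q. c q * d q a"] scale by simp
qed

lemma mat_vec_solvable_if_injective:
  fixes A :: "'a::field mat"
  assumes A: "A \<in> carrier_mat K K" and b: "b \<in> carrier_vec K"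
    and inj: "\<And>v. v \<in> carrier_vec K \<Longrightarrow> A *\<^sub>v v = 0\<^sub>v K \<Longrightarrow> v = 0\<^sub>v K"
  shows "\<exists>w\<in>carrier_vec K. A *\<^sub>v w = b"
proof -
  have "det A \<noteq> 0"
    using det_0_iff_vec_prod_zero_field[OF A] inj by blast
  then obtain B where B: "B \<in> carrier_mat K K" and inverse: "A * B = 1\<^sub>m K"
    using det_non_zero_imp_unit[OF A, of "()"] unfolding Units_def ring_mat_def by auto
  have "A *\<^sub>v (B *\<^sub>v b) = (A * B) *\<^sub>v b"
    by (rule assoc_mult_mat_vec[symmetric, OF A B b])
  also have "\<dots> = b"
    using b unfolding inverse by simp
  finally have "A *\<^sub>v (B *\<^sub>v b) = b" .
  then show ?thesis
    using B b by (intro bexI[of _ "B *\<^sub>v b"]) auto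
qed

lemma linear_system_solvable_if_injective:
  fixes T :: "('a \<Rightarrow> real) \<Rightarrow> 'a \<Rightarrow> real"
  assumes I: "finite I"
    and add: "\<And>x y k. k \<in> I \<Longrightarrow> T (\<lambda>a. x a + y a) k = T x k + T y k"
    and scale: "\<And>c x k. k \<in> I \<Longrightarrow> T (\<lambda>a. c * x a) k = c * T x k"
    and inj: "\<And>x. \<forall>k\<in>I. T x k = 0 \<Longrightarrow> \<forall>a\<in>I. x a = 0"
  shows "\<exists>x. \<forall>k\<in>I. T x k = b k"
proof -
  define K where "K = card I"
  obtain e where e: "bij_betw e {0..<K} I"
    using ex_bij_betw_nat_finite[OF I] unfolding K_def by blast
  have e_inj: "\<And>p q. p < K \<Longrightarrow> q < K \<Longrightarrow> e p = e q \<Longrightarrow> p = q"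
    and e_in: "\<And>p. p < K \<Longrightarrow> e p \<in> I"
    and e_onto: "\<And>k. k \<in> I \<Longrightarrow> \<exists>p<K. k = e p"
    using e unfolding bij_betw_def inj_on_def by auto
  define d where "d q a = (if a = e q then 1 else (0::real))" for q a
  define B where "B = Matrix.mat K K (\<lambda>(p, q). T (d q) (e p))"
  have B: "B \<in> carrier_mat K K"
    unfolding B_def by simp
  define x_of where "x_of v a = (\<Sum>q\<in>{0..<K}. v $ q * d q a)" for v :: "real vec" and a
  have x_of_e: "x_of v (e p) = v $ p" if p: "p < K" for v p
  proof -
    have "x_of v (e p) = (\<Sum>q\<in>{0..<K}. if q = p then v $ q else 0)"
      unfolding x_of_def d_def using e_inj p by (intro sum.cong) auto
    then show ?thesis
      using p by simp
  qed
  have T_x_of: "T (x_of v) (e p) = (B *\<^sub>v v) $ p" if p: "p < K" and v: "v \<in> carrier_vec K" for v p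
  proof -
    have "T (x_of v) (e p) = (\<Sum>q\<in>{0..<K}. v $ q * T (d q) (e p))"
      unfolding x_of_def using add scale e_in[OF p] by (intro linear_combination_apply) auto
    also have "\<dots> = (B *\<^sub>v v) $ p"
      using p v unfolding B_def by (simp add: mult_mat_vec_def scalar_prod_def mult.commute)
    finally show ?thesis .
  qed
  have kernel: "v = 0\<^sub>v K" if v: "v \<in> carrier_vec K" "B *\<^sub>v v = 0\<^sub>v K" for v
  proof -
    have "\<forall>k\<in>I. T (x_of v) k = 0"
      using T_x_of v e_onto by fastforce
    then have "\<forall>p<K. v $ p = 0"
      using inj x_of_e e_in by metis
    then show ?thesis
      using v by (intro eq_vecI) auto
  qed
  obtain w where w: "w \<in> carrier_vec K" "B *\<^sub>v w = Matrix.vec K (\<lambda>p. b (e p))"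
    using mat_vec_solvable_if_injective[OF B vec_carrier kernel] by blast
  then have "\<forall>k\<in>I. T (x_of w) k = b k"
    using T_x_of e_onto by fastforce
  then show ?thesis
    by blast
qed

section \<open>Periodic grid functions\<close>

lemma periodic_grid_add_mult:
  assumes per: "periodic_grid N g"
  shows "g (l + q * int N) = g l"
proof (induction q rule: int_induct[where k = 0])
  case (step1 q)
  then show ?case
    using per unfolding periodic_grid_def by (metis add.assoc distrib_right mult_1)
next
  case (step2 q)
  then show ?case
    using per unfolding periodic_grid_def by (metis add.assoc diff_add_cancel distrib_right mult_1)
qed simp

lemma periodic_grid_mod:
  assumes "periodic_grid N g"
  shows "g l = g (1 + (l - 1) mod int N)"
proof -
  have "l = (1 + (l - 1) mod int N) + ((l - 1) div int N) * int N"
    by simp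
  then show ?thesis
    using periodic_grid_add_mult[OF assms] by metis
qed

lemma mod_in_cells:
  assumes "N \<ge> 1"
  shows "1 + (l - 1) mod int N \<in> {1..int N}"
proof -
  have pos: "int N > 0"
    using assms by simp
  show ?thesis
    using pos_mod_bound[OF pos, of "l - 1"] pos_mod_sign[OF pos, of "l - 1"] by auto
qed

lemma periodic_grid_eq_if_eq_on_cells:
  assumes N: "N \<ge> 1" and "periodic_grid N u" and "periodic_grid N v"
    and eq: "\<And>l. l \<in> {1..int N} \<Longrightarrow> u l = v l"
  shows "u l = v l"
  using periodic_grid_mod[of N u l] periodic_grid_mod[of N v l] assms eq[OF mod_in_cells[OF N]] by simp

lemma sum_cells_eq_sum_lessThan: "(\<Sum>l\<in>{1..int N}. g l) = (\<Sum>k<N. g (int k + 1))"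
  by (rule sum.reindex_bij_witness[of _ "\<lambda>k. int k + 1" "\<lambda>l. nat (l - 1)"]) auto

lemma sum_cells_shift:
  assumes N: "N \<ge> 1" and per: "periodic_grid N g"
  shows "(\<Sum>l\<in>{1..int N}. g (l - 1)) = (\<Sum>l\<in>{1..int N}. g l)"
proof -
  obtain N' where N': "N = Suc N'"
    using N by (cases N) auto
  have "g 0 = g (int N)"
    using per unfolding periodic_grid_def by (metis add.left_neutral)
  then have "(\<Sum>k<N. g (int k)) = g (int N) + (\<Sum>k<N'. g (int k + 1))"
    unfolding N' sum.lessThan_Suc_shift by (simp add: add.commute)
  also have "\<dots> = (\<Sum>k<N. g (int k + 1))"
    unfolding N' sum.lessThan_Suc by (simp add: add.commute)
  finally have "(\<Sum>k<N. g (int k)) = (\<Sum>k<N. g (int k + 1))" .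
  then show ?thesis
    unfolding sum_cells_eq_sum_lessThan by simp
qed

lemma periodic_grid_Dh: "periodic_grid N g \<Longrightarrow> periodic_grid N (Dh h g)"
  unfolding periodic_grid_def Dh_def by (metis add.commute add.left_commute)

lemma periodic_grid_dh: "periodic_grid N g \<Longrightarrow> periodic_grid N (dh h g)"
  unfolding periodic_grid_def dh_def by (metis add_diff_eq diff_add_eq)

lemma abs_diff_le_total_variation:
  fixes u :: "int \<Rightarrow> real"
  assumes "a \<in> {1..int N}" "b \<in> {1..int N}"
  shows "\<bar>u b - u a\<bar> \<le> (\<Sum>l\<in>{1..int N}. \<bar>u (l + 1) - u l\<bar>)"
proof -
  have path: "\<bar>u (a + int k) - u a\<bar> \<le> (\<Sum>l\<in>{a..<a + int k}. \<bar>u (l + 1) - u l\<bar>)" for a k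
  proof (induction k)
    case (Suc k)
    have "{a..<a + int (Suc k)} = insert (a + int k) {a..<a + int k}"
      by auto
    moreover have "\<bar>u (a + int k + 1) - u a\<bar> \<le> \<bar>u (a + int k + 1) - u (a + int k)\<bar> + \<bar>u (a + int k) - u a\<bar>"
      using abs_triangle_ineq[of "u (a + int k + 1) - u (a + int k)" "u (a + int k) - u a"] by simp
    ultimately show ?case
      using Suc by (simp add: ac_simps)
  qed simp
  have "\<bar>u b - u a\<bar> \<le> (\<Sum>l\<in>{1..int N}. \<bar>u (l + 1) - u l\<bar>)" if "a \<le> b" "a \<in> {1..int N}" "b \<in> {1..int N}"
    for a b
  proof -
    have "\<bar>u b - u a\<bar> \<le> (\<Sum>l\<in>{a..<b}. \<bar>u (l + 1) - u l\<bar>)"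
      using path[of a "nat (b - a)"] that by simp
    also have "\<dots> \<le> (\<Sum>l\<in>{1..int N}. \<bar>u (l + 1) - u l\<bar>)"
      using that by (intro sum_mono2) auto
    finally show ?thesis .
  qed
  then show ?thesis
    using assms by (metis abs_minus_commute linorder_linear)
qed

text \<open>Discrete Poincare inequality: a mean-zero grid function changes sign, so it is
  bounded by its total variation.\<close>

lemma abs_le_total_variation_if_sum_zero:
  fixes u :: "int \<Rightarrow> real"
  assumes N: "N \<ge> 1" and sum: "(\<Sum>l\<in>{1..int N}. u l) = 0" and l0: "l0 \<in> {1..int N}"
  shows "\<bar>u l0\<bar> \<le> (\<Sum>l\<in>{1..int N}. \<bar>u (l + 1) - u l\<bar>)"
proof -
  obtain l1 where l1: "l1 \<in> {1..int N}" "u l0 * u l1 \<le> 0"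
  proof (rule ccontr)
    assume "\<not> thesis"
    with that have "\<forall>l\<in>{1..int N}. u l0 * u l > 0"
      by force
    then have "(\<Sum>l\<in>{1..int N}. u l0 * u l) > 0"
      using N by (intro sum_pos) auto
    then show False
      using sum by (simp add: sum_distrib_left[symmetric])
  qed
  have "\<bar>u l0\<bar> \<le> \<bar>u l0 - u l1\<bar>"
    using l1(2) by (cases "u l0 \<ge> 0"; cases "u l1 \<ge> 0") (auto simp: mult_le_0_iff)
  also have "\<dots> \<le> (\<Sum>l\<in>{1..int N}. \<bar>u (l + 1) - u l\<bar>)"
    by (rule abs_diff_le_total_variation[OF l1(1) l0])
  finally show ?thesis .
qed

lemma sum_mult_dh:
  assumes N: "N \<ge> 1" and per_u: "periodic_grid N u" and per_G: "periodic_grid N G"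
  shows "(\<Sum>l\<in>{1..int N}. u l * (- dh h G l)) = (\<Sum>l\<in>{1..int N}. Dh h u l * G l)"
proof -
  have "periodic_grid N (\<lambda>l. u (l + 1) * G l)"
    using per_u per_G unfolding periodic_grid_def by (metis add.commute add.left_commute)
  from sum_cells_shift[OF N this]
  have shift: "(\<Sum>l\<in>{1..int N}. u l * G (l - 1)) = (\<Sum>l\<in>{1..int N}. u (l + 1) * G l)"
    by simp
  have "(\<Sum>l\<in>{1..int N}. u l * (- dh h G l))
      = ((\<Sum>l\<in>{1..int N}. u l * G (l - 1)) - (\<Sum>l\<in>{1..int N}. u l * G l)) / h"
    unfolding dh_def sum_divide_distrib sum_subtractf[symmetric]
    by (intro sum.cong) (simp_all add: algebra_simps diff_divide_distrib)
  also have "\<dots> = (\<Sum>l\<in>{1..int N}. Dh h u l * G l)"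
    unfolding shift Dh_def sum_divide_distrib sum_subtractf[symmetric]
    by (intro sum.cong) (simp_all add: algebra_simps)
  finally show ?thesis .
qed

section \<open>The operator \<open>L\<^sub>\<Phi>\<close>\<close>

definition flux :: "nat \<Rightarrow> real \<Rightarrow> (nat \<Rightarrow> nat \<Rightarrow> int \<Rightarrow> real) \<Rightarrow> (nat \<Rightarrow> int \<Rightarrow> real)
    \<Rightarrow> nat \<Rightarrow> int \<Rightarrow> real" where
  "flux n h Phi f i k = (\<Sum>j\<in>{1..n-1}. Phi i j k * Dh h (f j) k)"

lemma LPhi_eq_dh_flux: "LPhi n h Phi f i l = - dh h (flux n h Phi f i) l"
  unfolding LPhi_def flux_def ..

lemma periodic_grid_flux:
  assumes "\<forall>j\<in>{1..n-1}. periodic_grid N (f j)" and "\<forall>i j. periodic_grid N (Phi i j)"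
  shows "periodic_grid N (flux n h Phi f i)"
  using assms periodic_grid_Dh unfolding periodic_grid_def flux_def by simp

lemma periodic_grid_LPhi:
  assumes "\<forall>j\<in>{1..n-1}. periodic_grid N (f j)" and "\<forall>i j. periodic_grid N (Phi i j)"
  shows "periodic_grid N (LPhi n h Phi f i)"
  using periodic_grid_dh[OF periodic_grid_flux[OF assms]]
  unfolding LPhi_eq_dh_flux periodic_grid_def by simp

lemma flux_add: "flux n h Phi (\<lambda>i l. f i l + g i l) i k = flux n h Phi f i k + flux n h Phi g i k"
proof -
  have "Dh h (\<lambda>l. f j l + g j l) k = Dh h (f j) k + Dh h (g j) k" for j
    unfolding Dh_def by (simp add: add_divide_distrib[symmetric])
  then show ?thesis
    unfolding flux_def by (simp add: sum.distrib[symmetric] distrib_left)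
qed

lemma LPhi_add: "LPhi n h Phi (\<lambda>i l. f i l + g i l) i l = LPhi n h Phi f i l + LPhi n h Phi g i l"
  unfolding LPhi_eq_dh_flux dh_def flux_add by (simp add: diff_divide_distrib add_divide_distrib)

lemma LPhi_scale: "LPhi n h Phi (\<lambda>i l. c * f i l) i l = c * LPhi n h Phi f i l"
  unfolding LPhi_def dh_def Dh_def by (simp add: sum_distrib_left algebra_simps)

lemma LPhi_diff: "LPhi n h Phi (\<lambda>i l. f i l - g i l) i l = LPhi n h Phi f i l - LPhi n h Phi g i l"
  using LPhi_add[of n h Phi f "\<lambda>i l. -1 * g i l"] LPhi_scale[of n h Phi "-1" g] by simp

lemma sum_cells_LPhi:
  assumes N: "N \<ge> 1" and "\<forall>j\<in>{1..n-1}. periodic_grid N (f j)" and "\<forall>i j. periodic_grid N (Phi i j)"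
  shows "(\<Sum>l\<in>{1..int N}. LPhi n h Phi f i l) = 0"
  unfolding LPhi_eq_dh_flux dh_def sum_negf sum_divide_distrib[symmetric] sum_subtractf
  using sum_cells_shift[OF N periodic_grid_flux[OF assms(2,3)]] by simp

lemma energy_identity:
  assumes N: "N \<ge> 1" and per_f: "\<forall>j\<in>{1..n-1}. periodic_grid N (f j)"
    and per_Phi: "\<forall>i j. periodic_grid N (Phi i j)"
  shows "(\<Sum>i\<in>{1..n-1}. \<Sum>l\<in>{1..int N}. f i l * LPhi n h Phi f i l)
       = (\<Sum>l\<in>{1..int N}. quad_form (n-1) (\<lambda>i j. Phi i j l) (\<lambda>i. Dh h (f i) l))"
proof -
  have "(\<Sum>i\<in>{1..n-1}. \<Sum>l\<in>{1..int N}. f i l * LPhi n h Phi f i l)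
      = (\<Sum>i\<in>{1..n-1}. \<Sum>l\<in>{1..int N}. Dh h (f i) l * flux n h Phi f i l)"
    unfolding LPhi_eq_dh_flux using per_f
    by (intro sum.cong refl sum_mult_dh[OF N] periodic_grid_flux[OF per_f per_Phi]) auto
  also have "\<dots> = (\<Sum>l\<in>{1..int N}. \<Sum>i\<in>{1..n-1}. Dh h (f i) l * flux n h Phi f i l)"
    by (rule sum.swap)
  also have "\<dots> = (\<Sum>l\<in>{1..int N}. quad_form (n-1) (\<lambda>i j. Phi i j l) (\<lambda>i. Dh h (f i) l))"
    unfolding quad_form_def flux_def by (simp add: sum_distrib_left mult_ac)
  finally show ?thesis .
qed

lemma eq_0_if_LPhi_eq_0:
  assumes N: "N \<ge> 1" and h: "h > 0"
    and spd: "\<forall>l. sym_pos_def (n-1) (\<lambda>i j. Phi i j l)"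
    and per_Phi: "\<forall>i j. periodic_grid N (Phi i j)"
    and per_f: "\<forall>i\<in>{1..n-1}. periodic_grid N (f i)"
    and sum_f: "\<forall>i\<in>{1..n-1}. (\<Sum>l\<in>{1..int N}. f i l) = 0"
    and zero: "\<forall>i\<in>{1..n-1}. \<forall>l\<in>{1..int N}. LPhi n h Phi f i l = 0"
    and i: "i \<in> {1..n-1}"
  shows "f i l = 0"
proof -
  have "(\<Sum>l\<in>{1..int N}. quad_form (n-1) (\<lambda>i j. Phi i j l) (\<lambda>i. Dh h (f i) l)) = 0"
    unfolding energy_identity[OF N per_f per_Phi, symmetric] using zero by simp
  then have "\<forall>l\<in>{1..int N}. quad_form (n-1) (\<lambda>i j. Phi i j l) (\<lambda>i. Dh h (f i) l) = 0"
    using quad_form_nonneg spd by (subst (asm) sum_nonneg_eq_0_iff) auto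
  then have "\<forall>l\<in>{1..int N}. Dh h (f i) l = 0"
    using quad_form_pos[OF spd[rule_format]] i by (metis less_irrefl)
  then have "(\<Sum>l\<in>{1..int N}. \<bar>f i (l + 1) - f i l\<bar>) = 0"
    using h unfolding Dh_def by simp
  then have "\<bar>f i (1 + (l - 1) mod int N)\<bar> \<le> 0"
    using abs_le_total_variation_if_sum_zero[OF N _ mod_in_cells[OF N]] sum_f i by metis
  then show ?thesis
    using periodic_grid_mod per_f i by fastforce
qed

section \<open>Existence and uniqueness of \<open>L\<^sub>\<Phi>\<^sup>-\<^sup>1 \<phi>\<close>\<close>

definition periodic_ext :: "nat \<Rightarrow> nat \<Rightarrow> (nat \<times> int \<Rightarrow> real) \<Rightarrow> nat \<Rightarrow> int \<Rightarrow> real" where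
  "periodic_ext n N x i l = (if i \<in> {1..n-1} then x (i, 1 + (l - 1) mod int N) else 0)"

lemma periodic_grid_periodic_ext: "periodic_grid N (periodic_ext n N x i)"
proof -
  have "(l + int N - 1) mod int N = (l - 1) mod int N" for l
    by (metis add.commute add_diff_eq mod_add_self1)
  then show ?thesis
    unfolding periodic_grid_def periodic_ext_def by presburger
qed

lemma periodic_ext_add: "periodic_ext n N (\<lambda>a. x a + y a) = (\<lambda>i l. periodic_ext n N x i l + periodic_ext n N y i l)"
  unfolding periodic_ext_def by (auto simp: fun_eq_iff)

lemma periodic_ext_scale: "periodic_ext n N (\<lambda>a. c * x a) = (\<lambda>i l. c * periodic_ext n N x i l)"
  unfolding periodic_ext_def by (auto simp: fun_eq_iff)

lemma periodic_ext_cell: "i \<in> {1..n-1} \<Longrightarrow> l \<in> {1..int N} \<Longrightarrow> periodic_ext n N x i l = x (i, l)"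
  unfolding periodic_ext_def by simp

definition solves_LPhi :: "nat \<Rightarrow> nat \<Rightarrow> real \<Rightarrow> (nat \<Rightarrow> nat \<Rightarrow> int \<Rightarrow> real) \<Rightarrow> (nat \<Rightarrow> int \<Rightarrow> real)
    \<Rightarrow> (nat \<Rightarrow> int \<Rightarrow> real) \<Rightarrow> bool" where
  "solves_LPhi n N h Phi phi f \<longleftrightarrow> in_C0 n N f \<and> (\<forall>i. i \<notin> {1..n-1} \<longrightarrow> f i = (\<lambda>_. 0))
       \<and> (\<forall>i\<in>{1..n-1}. \<forall>l. LPhi n h Phi f i l = phi i l)"

text \<open>On all of \<open>\<real>\<^bsup>{1..n-1} \<times> {1..N}\<^esup>\<close> the operator is not injective (constants lie in its
  kernel), so the componentwise sum is added; it vanishes on solutions because both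
  \<open>L\<^sub>\<Phi> f\<close> and the data have mean zero.\<close>

definition augmented_LPhi :: "nat \<Rightarrow> nat \<Rightarrow> real \<Rightarrow> (nat \<Rightarrow> nat \<Rightarrow> int \<Rightarrow> real)
    \<Rightarrow> (nat \<times> int \<Rightarrow> real) \<Rightarrow> nat \<times> int \<Rightarrow> real" where
  "augmented_LPhi n N h Phi x =
    (\<lambda>(i, l). LPhi n h Phi (periodic_ext n N x) i l + (\<Sum>k\<in>{1..int N}. x (i, k)))"

lemma augmented_LPhi_add:
  "augmented_LPhi n N h Phi (\<lambda>a. x a + y a) k = augmented_LPhi n N h Phi x k + augmented_LPhi n N h Phi y k"
  unfolding augmented_LPhi_def periodic_ext_add by (cases k) (simp add: LPhi_add sum.distrib)

lemma augmented_LPhi_scale: "augmented_LPhi n N h Phi (\<lambda>a. c * x a) k = c * augmented_LPhi n N h Phi x k"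
  unfolding augmented_LPhi_def periodic_ext_scale
  by (cases k) (simp add: LPhi_scale sum_distrib_left distrib_left)

lemma sum_eq_0_if_augmented_LPhi_eq:
  assumes N: "N \<ge> 1" and per_Phi: "\<forall>i j. periodic_grid N (Phi i j)"
    and eq: "\<forall>l\<in>{1..int N}. augmented_LPhi n N h Phi x (i, l) = g l"
    and sum_g: "(\<Sum>l\<in>{1..int N}. g l) = 0"
  shows "(\<Sum>k\<in>{1..int N}. x (i, k)) = 0"
proof -
  have "(\<Sum>l\<in>{1..int N}. LPhi n h Phi (periodic_ext n N x) i l + (\<Sum>k\<in>{1..int N}. x (i, k))) = 0"
    using eq sum_g unfolding augmented_LPhi_def by simp
  moreover have "(\<Sum>l\<in>{1..int N}. LPhi n h Phi (periodic_ext n N x) i l) = 0"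
    by (rule sum_cells_LPhi[OF N _ per_Phi]) (simp add: periodic_grid_periodic_ext)
  ultimately have "real N * (\<Sum>k\<in>{1..int N}. x (i, k)) = 0"
    by (simp add: sum.distrib)
  then show ?thesis
    using N by simp
qed

lemma augmented_LPhi_injective:
  assumes N: "N \<ge> 1" and h: "h > 0"
    and spd: "\<forall>l. sym_pos_def (n-1) (\<lambda>i j. Phi i j l)"
    and per_Phi: "\<forall>i j. periodic_grid N (Phi i j)"
    and zero: "\<forall>k\<in>{1..n-1} \<times> {1..int N}. augmented_LPhi n N h Phi x k = 0"
  shows "\<forall>a\<in>{1..n-1} \<times> {1..int N}. x a = 0"
proof
  fix a assume "a \<in> {1..n-1} \<times> {1..int N}"
  then obtain i l where a: "a = (i, l)" "i \<in> {1..n-1}" "l \<in> {1..int N}"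
    by blast
  have zero_at: "\<forall>l\<in>{1..int N}. augmented_LPhi n N h Phi x (i, l) = 0" if "i \<in> {1..n-1}" for i
    using zero that by blast
  have sum_x: "\<forall>i\<in>{1..n-1}. (\<Sum>k\<in>{1..int N}. x (i, k)) = 0"
    using sum_eq_0_if_augmented_LPhi_eq[OF N per_Phi zero_at] by simp
  have "periodic_ext n N x i l = 0"
  proof (rule eq_0_if_LPhi_eq_0[OF N h spd per_Phi _ _ _ a(2)])
    show "\<forall>i\<in>{1..n-1}. periodic_grid N (periodic_ext n N x i)"
      by (simp add: periodic_grid_periodic_ext)
    show "\<forall>i\<in>{1..n-1}. (\<Sum>l\<in>{1..int N}. periodic_ext n N x i l) = 0"
      using sum_x by (simp add: periodic_ext_cell)
    show "\<forall>i\<in>{1..n-1}. \<forall>l\<in>{1..int N}. LPhi n h Phi (periodic_ext n N x) i l = 0"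
      using zero_at sum_x unfolding augmented_LPhi_def by simp
  qed
  then show "x a = 0"
    using a by (simp add: periodic_ext_cell)
qed

lemma LPhi_solution_exists:
  assumes N: "N \<ge> 1" and h: "h > 0"
    and spd: "\<forall>l. sym_pos_def (n-1) (\<lambda>i j. Phi i j l)"
    and per_Phi: "\<forall>i j. periodic_grid N (Phi i j)"
    and phi: "in_C0 n N phi"
  shows "\<exists>f. solves_LPhi n N h Phi phi f"
proof -
  have "\<exists>x. \<forall>k\<in>{1..n-1} \<times> {1..int N}. augmented_LPhi n N h Phi x k = (case k of (i, l) \<Rightarrow> phi i l)"
    by (rule linear_system_solvable_if_injective[OF _ augmented_LPhi_add augmented_LPhi_scale
          augmented_LPhi_injective[OF N h spd per_Phi]]) simp
  then obtain x
    where x: "\<forall>k\<in>{1..n-1} \<times> {1..int N}. augmented_LPhi n N h Phi x k = (case k of (i, l) \<Rightarrow> phi i l)"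
    by blast
  have per_phi: "\<forall>i\<in>{1..n-1}. periodic_grid N (phi i)"
    and sum_phi: "\<forall>i\<in>{1..n-1}. (\<Sum>l\<in>{1..int N}. phi i l) = 0"
    using phi unfolding in_C0_def by auto
  have sum_x: "(\<Sum>k\<in>{1..int N}. x (i, k)) = 0" if i: "i \<in> {1..n-1}" for i
    using x i sum_phi by (intro sum_eq_0_if_augmented_LPhi_eq[OF N per_Phi, of _ _ _ _ "phi i"]) auto
  define f where "f = periodic_ext n N x"
  have per_f: "\<forall>i\<in>{1..n-1}. periodic_grid N (f i)"
    unfolding f_def by (simp add: periodic_grid_periodic_ext)
  have "LPhi n h Phi f i l = phi i l" if i: "i \<in> {1..n-1}" for i l
  proof (rule periodic_grid_eq_if_eq_on_cells[OF N periodic_grid_LPhi[OF per_f per_Phi]])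
    show "periodic_grid N (phi i)"
      using per_phi i by blast
    fix l assume "l \<in> {1..int N}"
    then have "augmented_LPhi n N h Phi x (i, l) = phi i l"
      using x i by simp
    then show "LPhi n h Phi f i l = phi i l"
      by (simp add: augmented_LPhi_def f_def sum_x[OF i])
  qed
  moreover have "in_C0 n N f"
    unfolding in_C0_def using per_f sum_x by (simp add: f_def periodic_ext_cell)
  moreover have "f i = (\<lambda>_. 0)" if "i \<notin> {1..n-1}" for i
    using that unfolding f_def periodic_ext_def by (simp only: if_False)
  ultimately have "solves_LPhi n N h Phi phi f"
    unfolding solves_LPhi_def by blast
  then show ?thesis
    by blast
qed

lemma LPhi_solution_unique:
  assumes N: "N \<ge> 1" and h: "h > 0"
    and spd: "\<forall>l. sym_pos_def (n-1) (\<lambda>i j. Phi i j l)"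
    and per_Phi: "\<forall>i j. periodic_grid N (Phi i j)"
    and f: "solves_LPhi n N h Phi phi f" and g: "solves_LPhi n N h Phi phi g"
  shows "f = g"
proof -
  have on_components: "f i l - g i l = 0" if i: "i \<in> {1..n-1}" for i l
  proof (rule eq_0_if_LPhi_eq_0[OF N h spd per_Phi _ _ _ i, of "\<lambda>i l. f i l - g i l"])
    show "\<forall>i\<in>{1..n-1}. periodic_grid N (\<lambda>l. f i l - g i l)"
      using f g unfolding solves_LPhi_def in_C0_def periodic_grid_def by auto
    show "\<forall>i\<in>{1..n-1}. (\<Sum>l\<in>{1..int N}. f i l - g i l) = 0"
      using f g unfolding solves_LPhi_def in_C0_def by (auto simp: sum_subtractf)
    show "\<forall>i\<in>{1..n-1}. \<forall>l\<in>{1..int N}. LPhi n h Phi (\<lambda>i l. f i l - g i l) i l = 0"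
      using f g unfolding solves_LPhi_def LPhi_diff by auto
  qed
  moreover have "f i = g i" if "i \<notin> {1..n-1}" for i
    using f g that unfolding solves_LPhi_def by simp
  ultimately show ?thesis
    by (metis eq_iff_diff_eq_0 ext)
qed

lemma solves_LPhi_inv:
  assumes N: "N \<ge> 1" and h: "h > 0"
    and spd: "\<forall>l. sym_pos_def (n-1) (\<lambda>i j. Phi i j l)"
    and per_Phi: "\<forall>i j. periodic_grid N (Phi i j)"
    and phi: "in_C0 n N phi"
  shows "solves_LPhi n N h Phi phi (LPhi_inv n N h Phi phi)"
proof -
  have "\<exists>!f. solves_LPhi n N h Phi phi f"
    using LPhi_solution_exists[OF assms] LPhi_solution_unique[OF N h spd per_Phi] by blast
  then show ?thesis
    unfolding LPhi_inv_def solves_LPhi_def[symmetric] by (rule theI')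
qed

section \<open>The maximum-norm estimate\<close>

lemma Linf_norm_eq_Max: "Linf_norm n N f = Max ((\<lambda>(i, l). \<bar>f i l\<bar>) ` ({1..n-1} \<times> {1..int N}))"
  unfolding Linf_norm_def by (rule arg_cong[where f = Max]) force

lemma Linf_norm_ge: "i \<in> {1..n-1} \<Longrightarrow> l \<in> {1..int N} \<Longrightarrow> \<bar>f i l\<bar> \<le> Linf_norm n N f"
  unfolding Linf_norm_eq_Max by (rule Max_ge) auto

lemma Linf_norm_attained:
  assumes "n \<ge> 2" and "N \<ge> 1"
  obtains i l where "i \<in> {1..n-1}" and "l \<in> {1..int N}" and "Linf_norm n N f = \<bar>f i l\<bar>"
proof -
  have "Linf_norm n N f \<in> (\<lambda>(i, l). \<bar>f i l\<bar>) ` ({1..n-1} \<times> {1..int N})"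
    unfolding Linf_norm_eq_Max using assms by (intro Max_in) auto
  then show ?thesis
    using that by auto
qed

lemma abs_le_sum_abs_Dh:
  assumes N: "N \<ge> 1" and h: "h > 0" and sum: "(\<Sum>l\<in>{1..int N}. u l) = 0" and l0: "l0 \<in> {1..int N}"
  shows "\<bar>u l0\<bar> \<le> h * (\<Sum>l\<in>{1..int N}. \<bar>Dh h u l\<bar>)"
proof -
  have "\<bar>u l0\<bar> \<le> (\<Sum>l\<in>{1..int N}. \<bar>u (l + 1) - u l\<bar>)"
    by (rule abs_le_total_variation_if_sum_zero[OF N sum l0])
  also have "\<dots> = h * (\<Sum>l\<in>{1..int N}. \<bar>Dh h u l\<bar>)"
    unfolding Dh_def sum_distrib_left using h by (simp add: abs_divide)
  finally show ?thesis .
qed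

lemma energy_bound:
  assumes N: "N \<ge> 1" and per_Phi: "\<forall>i j. periodic_grid N (Phi i j)"
    and f: "solves_LPhi n N h Phi phi f"
    and phi_le: "\<forall>i\<in>{1..n-1}. \<forall>l\<in>{1..int N}. \<bar>phi i l\<bar> \<le> M"
    and coercive: "\<And>l x. l \<in> {1..int N} \<Longrightarrow> lam * sq_norm (n-1) x \<le> quad_form (n-1) (\<lambda>i j. Phi i j l) x"
  shows "lam * (\<Sum>l\<in>{1..int N}. sq_norm (n-1) (\<lambda>i. Dh h (f i) l))
    \<le> real (n-1) * real N * (Linf_norm n N f * M)"
proof -
  have per_f: "\<forall>i\<in>{1..n-1}. periodic_grid N (f i)"
    and LPhi_f: "\<forall>i\<in>{1..n-1}. \<forall>l. LPhi n h Phi f i l = phi i l"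
    using f unfolding solves_LPhi_def in_C0_def by auto
  have "lam * (\<Sum>l\<in>{1..int N}. sq_norm (n-1) (\<lambda>i. Dh h (f i) l))
      \<le> (\<Sum>l\<in>{1..int N}. quad_form (n-1) (\<lambda>i j. Phi i j l) (\<lambda>i. Dh h (f i) l))"
    unfolding sum_distrib_left by (intro sum_mono coercive)
  also have "\<dots> = (\<Sum>i\<in>{1..n-1}. \<Sum>l\<in>{1..int N}. f i l * phi i l)"
    unfolding energy_identity[OF N per_f per_Phi, symmetric] using LPhi_f by simp
  also have "\<dots> \<le> (\<Sum>i\<in>{1..n-1}. \<Sum>l\<in>{1..int N}. Linf_norm n N f * M)"
  proof (intro sum_mono)
    fix i l assume i: "i \<in> {1..n-1}" and l: "l \<in> {1..int N}"
    have "f i l * phi i l \<le> \<bar>f i l\<bar> * \<bar>phi i l\<bar>"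
      by (simp add: abs_mult[symmetric])
    also have "\<dots> \<le> Linf_norm n N f * M"
      using Linf_norm_ge[OF i l, of f] phi_le i l by (intro mult_mono) (auto intro: order_trans[OF abs_ge_zero])
    finally show "f i l * phi i l \<le> Linf_norm n N f * M" .
  qed
  finally show ?thesis
    by simp
qed

lemma sq_le_sum_sq_norm_Dh:
  assumes N: "N \<ge> 1" and h: "h > 0" and i0: "i0 \<in> {1..n-1}" and l0: "l0 \<in> {1..int N}"
    and sum_f: "(\<Sum>l\<in>{1..int N}. f i0 l) = 0"
  shows "(f i0 l0)\<^sup>2 \<le> h\<^sup>2 * real N * (\<Sum>l\<in>{1..int N}. sq_norm (n-1) (\<lambda>i. Dh h (f i) l))"
proof -
  define D where "D l = \<bar>Dh h (f i0) l\<bar>" for l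
  have le: "\<bar>f i0 l0\<bar> \<le> h * (\<Sum>l\<in>{1..int N}. D l)"
    unfolding D_def by (rule abs_le_sum_abs_Dh[OF N h sum_f l0])
  have "(f i0 l0)\<^sup>2 \<le> h\<^sup>2 * (\<Sum>l\<in>{1..int N}. D l)\<^sup>2"
    using power_mono[OF le abs_ge_zero, of 2] by (simp add: power_mult_distrib)
  also have "(\<Sum>l\<in>{1..int N}. D l)\<^sup>2 \<le> real N * (\<Sum>l\<in>{1..int N}. (D l)\<^sup>2)"
    using sum_squared_le_sum_of_squares[of D "{1..int N}"] by (simp add: D_def mult.commute)
  also have "(\<Sum>l\<in>{1..int N}. (D l)\<^sup>2) \<le> (\<Sum>l\<in>{1..int N}. sq_norm (n-1) (\<lambda>i. Dh h (f i) l))"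
    unfolding sq_norm_def D_def
    using member_le_sum[OF i0, of "\<lambda>i. (Dh h (f i) _)\<^sup>2"] by (intro sum_mono) simp
  finally show ?thesis
    by (simp add: mult_left_mono mult.assoc)
qed

lemma Linf_norm_solution_le:
  assumes n: "n \<ge> 2" and N: "N \<ge> 1" and h: "h > 0" and lam: "lam > 0"
    and per_Phi: "\<forall>i j. periodic_grid N (Phi i j)"
    and f: "solves_LPhi n N h Phi phi f"
    and phi_le: "\<forall>i\<in>{1..n-1}. \<forall>l\<in>{1..int N}. \<bar>phi i l\<bar> \<le> M"
    and coercive: "\<And>l x. l \<in> {1..int N} \<Longrightarrow> lam * sq_norm (n-1) x \<le> quad_form (n-1) (\<lambda>i j. Phi i j l) x"
  shows "Linf_norm n N f \<le> (h * real N)\<^sup>2 * real (n-1) * M / lam"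
proof -
  define F where "F = Linf_norm n N f"
  define B where "B = (h * real N)\<^sup>2 * real (n-1) * M / lam"
  obtain i0 l0 where i0: "i0 \<in> {1..n-1}" and l0: "l0 \<in> {1..int N}" and F: "F = \<bar>f i0 l0\<bar>"
    using Linf_norm_attained[OF n N] unfolding F_def by blast
  have "F\<^sup>2 = (f i0 l0)\<^sup>2"
    unfolding F by simp
  also have "\<dots> \<le> h\<^sup>2 * real N * (\<Sum>l\<in>{1..int N}. sq_norm (n-1) (\<lambda>i. Dh h (f i) l))"
    using f i0 by (intro sq_le_sum_sq_norm_Dh[OF N h i0 l0]) (simp add: solves_LPhi_def in_C0_def)
  also have "\<dots> \<le> h\<^sup>2 * real N * (real (n-1) * real N * F * M / lam)"
    using energy_bound[OF N per_Phi f phi_le coercive] lam unfolding F_def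
    by (intro mult_left_mono) (simp_all add: field_simps)
  also have "\<dots> = F * B"
    unfolding B_def by (simp add: power2_eq_square mult_ac)
  finally have "F * F \<le> F * B"
    by (simp add: power2_eq_square)
  moreover have "B \<ge> 0"
  proof -
    have "\<bar>phi 1 1\<bar> \<le> M"
      using phi_le n N by simp
    then show ?thesis
      unfolding B_def using lam by simp
  qed
  moreover have "F \<ge> 0"
    using F by simp
  ultimately have "F \<le> B"
    by (cases "F = 0") (simp_all add: mult_le_cancel_left_pos)
  then show ?thesis
    unfolding F_def B_def .
qed

lemma le_scaled_bound:
  fixes L X M lam :: real and m N :: nat
  assumes L: "L > 0" and N: "N \<ge> 1" and nonneg: "M / lam \<ge> 0" and X: "X \<le> L\<^sup>2 * real m * (M / lam)"
  shows "X \<le> L\<^sup>2 * sqrt L * sqrt (real m) * M / lam * (L / real N) powr (-1/2) * sqrt (real m)"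
proof -
  define K where "K = M / lam"
  have K: "K \<ge> 0"
    unfolding K_def by (rule nonneg)
  have "(L / real N) powr (-1/2) = sqrt (real N) / sqrt L"
    using L N by (simp add: powr_minus_divide powr_half_sqrt real_sqrt_divide)
  then have p: "sqrt L * (L / real N) powr (-1/2) = sqrt (real N)"
    using L by simp
  have "L\<^sup>2 * real m * K \<le> L\<^sup>2 * real m * K * sqrt (real N)"
    using mult_left_mono[of 1 "sqrt (real N)" "L\<^sup>2 * real m * K"] N K by simp
  also have "\<dots> = L\<^sup>2 * (sqrt (real m) * sqrt (real m)) * K * (sqrt L * (L / real N) powr (-1/2))"
    unfolding p by simp
  also have "\<dots> = L\<^sup>2 * sqrt L * sqrt (real m) * K * (L / real N) powr (-1/2) * sqrt (real m)"
    by (simp only: mult_ac)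
  finally show ?thesis
    using X unfolding K_def by simp
qed

theorem lemma3p2:
  fixes n :: nat and L :: real
  assumes "n \<ge> 2" and "L > 0"
  shows "\<exists>C>0. \<forall>(N::nat) Phi phi (M::real) lam.
     N \<ge> 1 \<longrightarrow>
     (\<forall>i j. periodic_grid N (Phi i j)) \<longrightarrow>
     (\<forall>l. sym_pos_def (n-1) (\<lambda>i j. Phi i j l)) \<longrightarrow>
     lam = lambda_min n N Phi \<longrightarrow>
     in_C0 n N phi \<longrightarrow>
     Linf_norm n N phi \<le> M \<longrightarrow>
     Linf_norm n N (LPhi_inv n N (L / real N) Phi phi)
       \<le> C * M / lam * (L / real N) powr (-1/2) * sqrt (real (n-1))"
proof (intro exI[of _ "L\<^sup>2 * sqrt L * sqrt (real (n-1))"] conjI allI impI)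
  show "L\<^sup>2 * sqrt L * sqrt (real (n-1)) > 0"
    using assms by simp
  fix N :: nat and Phi phi and M lam :: real
  assume N: "N \<ge> 1" and per_Phi: "\<forall>i j. periodic_grid N (Phi i j)"
    and spd: "\<forall>l. sym_pos_def (n-1) (\<lambda>i j. Phi i j l)" and lam: "lam = lambda_min n N Phi"
    and phi: "in_C0 n N phi" and M: "Linf_norm n N phi \<le> M"
  define h where "h = L / real N"
  have h: "h > 0" and hN: "h * real N = L"
    unfolding h_def using assms N by simp_all
  have lam_pos: "lam > 0"
    unfolding lam by (rule lambda_min_pos_and_below_quad_form(1)[OF assms(1) N spd])
  have "\<bar>phi 1 1\<bar> \<le> Linf_norm n N phi"
    using assms(1) N by (intro Linf_norm_ge) auto
  then have M_nonneg: "M \<ge> 0"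
    using M by linarith
  have "Linf_norm n N (LPhi_inv n N h Phi phi) \<le> (h * real N)\<^sup>2 * real (n-1) * M / lam"
  proof (rule Linf_norm_solution_le[OF assms(1) N h lam_pos per_Phi solves_LPhi_inv[OF N h spd per_Phi phi]])
    show "\<forall>i\<in>{1..n-1}. \<forall>l\<in>{1..int N}. \<bar>phi i l\<bar> \<le> M"
      using Linf_norm_ge M by (blast intro: order_trans)
  qed (use lambda_min_pos_and_below_quad_form(2)[OF assms(1) N spd] lam in blast)
  then have X: "Linf_norm n N (LPhi_inv n N (L / real N) Phi phi) \<le> L\<^sup>2 * real (n-1) * (M / lam)"
    unfolding hN h_def[symmetric] by simp
  show "Linf_norm n N (LPhi_inv n N (L / real N) Phi phi)
      \<le> L\<^sup>2 * sqrt L * sqrt (real (n-1)) * M / lam * (L / real N) powr (-1/2) * sqrt (real (n-1))"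
    by (rule le_scaled_bound[OF assms(2) N _ X]) (use lam_pos M_nonneg in simp)
qed

end
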